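(* For the iterates of SONATA with step-size $\alpha\in(0,1]$ under Assumptions (A), (B), (C), (W), for all $\nu\ge0$: $$\|x_\perp^{\nu+1}\|\le\rho\|x_\perp^\nu\|+\alpha\rho\|d^\nu\|,\qquad \|y_\perp^{\nu+1}\|\le\rho\|y_\perp^\nu\|+2L_{\max}\rho\|x_\perp^\nu\|+\alpha L_{\max}\rho\|d^\nu\|.$$
   Context: Problem (P): minimize $U=F+G$ over $\mathcal K$, $F=\frac1m\sum_{i=1}^mf_i$. (A): $\mathcal K\subseteq\mathbb R^d$ nonempty closed convex; $f_i$ twice differentiable convex on open $\mathcal O\supseteq\mathcal K$; $\mu I\preceq\nabla^2F\preceq LI$ on $\mathcal K$ ($\mu>0$); $G$ convex on $\mathcal K$. $\nabla^2f_i\preceq L_iI$ on $\mathcal K$, $L_{\max}=\max_iL_i$. (B): connected undirected graph on $\{1,\dots,m\}$, edges $\mathcal E$. (W): $w_{ii}>0$; for $i\neq j$, $w_{ij}>0$ iff $(i,j)\in\mathcal E$, else 0; $W$ doubly stochastic; $\rho$ = largest singular value of $W\otimes I_d-\frac1m\mathbf1\mathbf1^\top\otimes I_d$. (C): $\tilde f_i:\mathcal O\times\mathcal O\to\mathbb R$ $C^2$, $\nabla\tilde f_i(x;x)=\nabla f_i(x)$, $\nabla\tilde f_i(\cdot;x)$ Lipschitz, $\tilde f_i(\cdot;x)$ strongly convex on $\mathcal K$ for all $x\in\mathcal K$. SONATA: $x_i^0\in\mathcal K$, $y_i^0=\nabla f_i(x_i^0)$; $\hat x_i^\nu=\arg\min_{x_i\in\mathcal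 K}\tilde f_i(x_i;x_i^\nu)+(y_i^\nu-\nabla f_i(x_i^\nu))^\top(x_i-x_i^\nu)+G(x_i)$; $d_i^\nu=\hat x_i^\nu-x_i^\nu$; $x_i^{\nu+1/2}=x_i^\nu+\alpha d_i^\nu$; $x_i^{\nu+1}=\sum_jw_{ij}x_j^{\nu+1/2}$; $y_i^{\nu+1}=\sum_jw_{ij}(y_j^\nu+\nabla f_j(x_j^{\nu+1})-\nabla f_j(x_j^\nu))$. $x^\nu,y^\nu,d^\nu\in\mathbb R^{md}$ stack the local vectors; $x_\perp^\nu=x^\nu-\mathbf1_m\otimes\frac1m\sum_ix_i^\nu$, $y_\perp^\nu=y^\nu-\mathbf1_m\otimes\frac1m\sum_iy_i^\nu$. *)

theory Defs
  imports "HOL-Analysis.Analysis"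
begin

definition strongly_convex_on :: "'a::real_normed_vector set \<Rightarrow> ('a \<Rightarrow> real) \<Rightarrow> bool" where
  "strongly_convex_on S f \<longleftrightarrow> (\<exists>c>0. \<forall>x\<in>S. \<forall>y\<in>S. \<forall>t::real. 0 \<le> t \<and> t \<le> 1 \<longrightarrow>
      f (t *\<^sub>R x + (1 - t) *\<^sub>R y) \<le> t * f x + (1 - t) * f y - c / 2 * t * (1 - t) * (norm (x - y))\<^sup>2)"

definition C2_on :: "('a::euclidean_space \<Rightarrow> real) \<Rightarrow> 'a set \<Rightarrow> bool" where
  "C2_on f S \<longleftrightarrow> (\<exists>(f' :: 'a \<Rightarrow> 'a \<Rightarrow>\<^sub>L real) (f'' :: 'a \<Rightarrow> 'a \<Rightarrow>\<^sub>L ('a \<Rightarrow>\<^sub>L real)).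
      (\<forall>x\<in>S. (f has_derivative blinfun_apply (f' x)) (at x) \<and>
              (f' has_derivative blinfun_apply (f'' x)) (at x)) \<and> continuous_on S f'')"

text \<open>Stacked vectors: an element of real^'d^'m is (x_1,...,x_m), each x_i in R^d;
  its norm is the Euclidean norm of the stacked vector in R^(md).\<close>

definition stack_avg :: "real^'d^'m \<Rightarrow> real^'d" where
  "stack_avg X = (1 / real CARD('m)) *\<^sub>R (\<Sum>i\<in>UNIV. X $ i)"

definition perp :: "real^'d^'m \<Rightarrow> real^'d^'m" where
  "perp X = (\<chi> i. X $ i - stack_avg X)"

text \<open>The linear map (W \<otimes> I_d - (1/m) 1 1^T \<otimes> I_d) acting on stacked vectors.\<close>
definition consensus_map :: "real^'m^'m \<Rightarrow> real^'d^'m \<Rightarrow> real^'d^'m" where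
  "consensus_map W X = (\<chi> i. \<Sum>j\<in>UNIV. (W $ i $ j - 1 / real CARD('m)) *\<^sub>R X $ j)"

definition largest_singular_value :: "('a::euclidean_space \<Rightarrow> 'b::euclidean_space) \<Rightarrow> real" where
  "largest_singular_value A = onorm A"

end

theory Submission
  imports Defs
begin

(* Since W is doubly stochastic, W \<otimes> I preserves averages, so the disagreement part of
  (W \<otimes> I) z is (W \<otimes> I - J) z, where J averages; this map kills consensus vectors and has norm \<rho>.
  Writing a SONATA step as x' = (W \<otimes> I)(x + \<alpha> d) and y' = (W \<otimes> I)(y + \<Delta>), this gives both
  bounds with \<rho> times the perturbation. The gradient increment \<Delta> is at most
  L_max |x' - x| \<le> L_max (2 |x_perp| + \<alpha> |d|), as W \<otimes> I is nonexpansive. The Lipschitz bound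
  for the gradients comes from the Hessian, which for a convex function is symmetric and positive
  semidefinite, so the bound on its quadratic form bounds its operator norm. Only the gradient and
  Hessian parts of (A), the properties of W and the update rules are needed. *)

lemma difference_quotient_along_ray_tendsto:
  fixes F :: "'a::real_normed_vector \<Rightarrow> real"
  assumes deriv: "(F has_derivative F') (at a)"
  shows "((\<lambda>t. (F (a + t *\<^sub>R v) - F a) / t) \<longlongrightarrow> F' v) (at_right 0)"
proof -
  have "((\<lambda>t. a + t *\<^sub>R v) has_derivative (\<lambda>t. t *\<^sub>R v)) (at 0 within {0<..})"
    by (auto intro!: derivative_eq_intros)
  from has_derivative_compose[OF this, of F F'] deriv
  have "((\<lambda>t. F (a + t *\<^sub>R v)) has_field_derivative F' v) (at 0 within {0<..})"
    using has_derivative_linear[OF deriv]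
    by (simp add: has_field_derivative_def o_def linear_cmul mult_commute_abs)
  then show ?thesis
    by (simp add: has_field_derivative_iff)
qed

lemma convex_on_gradient_inequality:
  fixes f :: "'a::real_inner \<Rightarrow> real"
  assumes cvx: "convex_on S f" and deriv: "(f has_derivative (\<lambda>h. g \<bullet> h)) (at a)"
    and a: "a \<in> S" and b: "b \<in> S"
  shows "g \<bullet> (b - a) \<le> f b - f a"
proof (rule tendsto_upperbound)
  show "((\<lambda>t. (f (a + t *\<^sub>R (b - a)) - f a) / t) \<longlongrightarrow> g \<bullet> (b - a)) (at_right 0)"
    by (rule difference_quotient_along_ray_tendsto[OF deriv])
  show "\<forall>\<^sub>F t in at_right 0. (f (a + t *\<^sub>R (b - a)) - f a) / t \<le> f b - f a"
    unfolding eventually_at_right_field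
  proof (intro exI[of _ 1] conjI allI impI)
    fix t :: real assume t: "0 < t" "t < 1"
    have "f (a + t *\<^sub>R (b - a)) = f ((1 - t) *\<^sub>R a + t *\<^sub>R b)" by (simp add: algebra_simps)
    also have "\<dots> \<le> (1 - t) * f a + t * f b"
      using convex_onD[OF cvx, of t a b] t a b by simp
    finally have "f (a + t *\<^sub>R (b - a)) - f a \<le> (f b - f a) * t"
      by (simp add: algebra_simps)
    then show "(f (a + t *\<^sub>R (b - a)) - f a) / t \<le> f b - f a"
      by (simp add: pos_divide_le_eq[OF t(1)])
  qed simp
qed simp

lemma convex_on_gradient_monotone:
  fixes f :: "'a::real_inner \<Rightarrow> real"
  assumes cvx: "convex_on S f"
    and grad: "\<And>w. w \<in> S \<Longrightarrow> (f has_derivative (\<lambda>h. g w \<bullet> h)) (at w)"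
    and "a \<in> S" "b \<in> S"
  shows "0 \<le> (g b - g a) \<bullet> (b - a)"
  using convex_on_gradient_inequality[OF cvx grad, of a b]
    convex_on_gradient_inequality[OF cvx grad, of b a] assms
  by (simp add: inner_diff_left inner_diff_right)

lemma convex_on_hessian_nonneg:
  fixes f :: "'a::real_inner \<Rightarrow> real"
  assumes cvx: "convex_on S f" and S: "open S" and z: "z \<in> S"
    and grad: "\<And>w. w \<in> S \<Longrightarrow> (f has_derivative (\<lambda>h. g w \<bullet> h)) (at w)"
    and hess: "(g has_derivative H) (at z)"
  shows "0 \<le> v \<bullet> H v"
proof (rule tendsto_lowerbound)
  show "((\<lambda>t. (g (z + t *\<^sub>R v) \<bullet> v - g z \<bullet> v) / t) \<longlongrightarrow> v \<bullet> H v) (at_right 0)"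
    using difference_quotient_along_ray_tendsto[of "\<lambda>w. g w \<bullet> v", OF has_derivative_inner_left[OF hess]]
    by (simp add: inner_commute)
  obtain r where r: "r > 0" "ball z r \<subseteq> S" using S z open_contains_ball by blast
  show "\<forall>\<^sub>F t in at_right 0. 0 \<le> (g (z + t *\<^sub>R v) \<bullet> v - g z \<bullet> v) / t"
    unfolding eventually_at_right_field
  proof (intro exI[of _ "r / (norm v + 1)"] conjI allI impI)
    fix t :: real assume t: "0 < t" "t < r / (norm v + 1)"
    have "t * norm v \<le> t * (norm v + 1)" using t by simp
    also have "\<dots> < r" using t by (simp add: pos_less_divide_eq add_nonneg_pos)
    finally have "t * norm v < r" .
    then have "z + t *\<^sub>R v \<in> S" using r t by (auto simp: dist_norm)
    from convex_on_gradient_monotone[OF cvx grad z this]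
    show "0 \<le> (g (z + t *\<^sub>R v) \<bullet> v - g z \<bullet> v) / t"
      using t by (simp add: inner_diff_left zero_le_mult_iff)
  qed (use r in \<open>simp add: add_nonneg_pos\<close>)
qed simp

lemma second_difference_mean_value:
  fixes f :: "'a::real_inner \<Rightarrow> real"
  assumes grad: "\<And>w. w \<in> S \<Longrightarrow> (f has_derivative (\<lambda>h. g w \<bullet> h)) (at w)"
    and in_S: "\<And>s. 0 \<le> s \<Longrightarrow> s \<le> t \<Longrightarrow> z + t *\<^sub>R p + s *\<^sub>R q \<in> S"
      "\<And>s. 0 \<le> s \<Longrightarrow> s \<le> t \<Longrightarrow> z + s *\<^sub>R q \<in> S"
    and t: "0 < t"
  obtains \<xi> where "0 < \<xi>" "\<xi> < t"
    "f (z + t *\<^sub>R p + t *\<^sub>R q) - f (z + t *\<^sub>R q) - f (z + t *\<^sub>R p) + f z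
      = t * ((g (z + t *\<^sub>R p + \<xi> *\<^sub>R q) - g (z + \<xi> *\<^sub>R q)) \<bullet> q)"
proof -
  define \<phi> where "\<phi> s = f (z + t *\<^sub>R p + s *\<^sub>R q) - f (z + s *\<^sub>R q)" for s
  have "(\<phi> has_derivative (\<lambda>h. h * ((g (z + t *\<^sub>R p + s *\<^sub>R q) - g (z + s *\<^sub>R q)) \<bullet> q)))
      (at s within {0..t})" if "0 \<le> s" "s \<le> t" for s
  proof -
    have "((\<lambda>s. z + t *\<^sub>R p + s *\<^sub>R q) has_derivative (\<lambda>h. h *\<^sub>R q)) (at s)"
      "((\<lambda>s. z + s *\<^sub>R q) has_derivative (\<lambda>h. h *\<^sub>R q)) (at s)"
      by (auto intro!: derivative_eq_intros)
    from has_derivative_diff[OF has_derivative_compose[OF this(1) grad[OF in_S(1)[OF that]]]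
        has_derivative_compose[OF this(2) grad[OF in_S(2)[OF that]]]]
    have "(\<phi> has_derivative (\<lambda>h. g (z + t *\<^sub>R p + s *\<^sub>R q) \<bullet> (h *\<^sub>R q) - g (z + s *\<^sub>R q) \<bullet> (h *\<^sub>R q)))
        (at s)"
      unfolding \<phi>_def by simp
    moreover have "(\<lambda>h. g (z + t *\<^sub>R p + s *\<^sub>R q) \<bullet> (h *\<^sub>R q) - g (z + s *\<^sub>R q) \<bullet> (h *\<^sub>R q))
        = (\<lambda>h. h * ((g (z + t *\<^sub>R p + s *\<^sub>R q) - g (z + s *\<^sub>R q)) \<bullet> q))"
      by (simp add: fun_eq_iff inner_diff_left right_diff_distrib)
    ultimately show ?thesis by (simp add: has_derivative_at_withinI)
  qed
  from mvt_simple[OF t this] obtain \<xi> where "\<xi> \<in> {0<..<t}"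
    and "\<phi> t - \<phi> 0 = t * ((g (z + t *\<^sub>R p + \<xi> *\<^sub>R q) - g (z + \<xi> *\<^sub>R q)) \<bullet> q)"
    by auto
  then show ?thesis by (intro that[of \<xi>]) (auto simp: \<phi>_def)
qed

lemma norm_scaleR_add_scaleR_le:
  "0 \<le> s \<Longrightarrow> s \<le> t \<Longrightarrow> norm (t *\<^sub>R p + s *\<^sub>R q) \<le> t * (norm p + norm q)"
  using norm_triangle_ineq[of "t *\<^sub>R p" "s *\<^sub>R q"] mult_right_mono[of s t "norm q"]
  by (simp add: distrib_left)

lemma second_difference_estimate:
  fixes f :: "'a::real_inner \<Rightarrow> real"
  assumes ball: "ball z \<delta> \<subseteq> S"
    and grad: "\<And>w. w \<in> S \<Longrightarrow> (f has_derivative (\<lambda>h. g w \<bullet> h)) (at w)"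
    and lin: "linear H" and e: "0 \<le> e"
    and approx: "\<And>y. norm (y - z) < \<delta> \<Longrightarrow> norm (g y - g z - H (y - z)) \<le> e * norm (y - z)"
    and t: "0 < t" "t * (norm p + norm q) < \<delta>"
  shows "\<bar>f (z + t *\<^sub>R p + t *\<^sub>R q) - f (z + t *\<^sub>R q) - f (z + t *\<^sub>R p) + f z - t * t * (q \<bullet> H p)\<bar>
    \<le> e * (t * t) * ((norm p + 2 * norm q) * norm q)"
proof -
  have short: "norm (t *\<^sub>R p + s *\<^sub>R q) \<le> t * (norm p + norm q)" "norm (s *\<^sub>R q) \<le> t * norm q"
    if "0 \<le> s" "s \<le> t" for s
    using norm_scaleR_add_scaleR_le[OF that] that by (simp_all add: mult_right_mono)
  have "t * norm q \<le> t * (norm p + norm q)" using t by simp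
  then have in_ball: "z + w \<in> S" if "norm w \<le> t * (norm p + norm q)" for w
    using that t ball by (auto simp: dist_norm)
  have approx_le: "norm (g (z + w) - g z - H w) \<le> e * c" if "norm w \<le> c" "c < \<delta>" for w c
    using approx[of "z + w"] that mult_left_mono[OF that(1) e] by simp
  have "z + t *\<^sub>R p + s *\<^sub>R q \<in> S" "z + s *\<^sub>R q \<in> S" if "0 \<le> s" "s \<le> t" for s
    using in_ball[OF short(1)[OF that]] in_ball[OF order_trans[OF short(2)[OF that]]]
      \<open>t * norm q \<le> t * (norm p + norm q)\<close>
    by (simp_all add: add.assoc)
  from second_difference_mean_value[OF grad this t(1)]
  obtain \<xi> where \<xi>: "0 < \<xi>" "\<xi> < t"
    and mvt: "f (z + t *\<^sub>R p + t *\<^sub>R q) - f (z + t *\<^sub>R q) - f (z + t *\<^sub>R p) + f z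
      = t * ((g (z + t *\<^sub>R p + \<xi> *\<^sub>R q) - g (z + \<xi> *\<^sub>R q)) \<bullet> q)" .
  define R1 where "R1 = g (z + t *\<^sub>R p + \<xi> *\<^sub>R q) - g z - H (t *\<^sub>R p + \<xi> *\<^sub>R q)"
  define R2 where "R2 = g (z + \<xi> *\<^sub>R q) - g z - H (\<xi> *\<^sub>R q)"
  have R1: "norm R1 \<le> e * (t * (norm p + norm q))"
    using approx_le[OF short(1) t(2)] \<xi> by (simp add: R1_def add.assoc)
  have R2: "norm R2 \<le> e * (t * norm q)"
    using approx_le[OF short(2)] \<xi> t(2) \<open>t * norm q \<le> t * (norm p + norm q)\<close> by (simp add: R2_def)
  have "\<bar>(R1 - R2) \<bullet> q\<bar> \<le> (norm R1 + norm R2) * norm q"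
    using Cauchy_Schwarz_ineq2[of "R1 - R2" q] mult_right_mono[OF norm_triangle_ineq4[of R1 R2]]
    by (meson norm_ge_zero order_trans)
  also have "\<dots> \<le> e * t * ((norm p + 2 * norm q) * norm q)"
    using mult_right_mono[OF add_mono[OF R1 R2] norm_ge_zero[of q]] by (simp add: algebra_simps)
  finally have R: "\<bar>(R1 - R2) \<bullet> q\<bar> \<le> e * t * ((norm p + 2 * norm q) * norm q)" .
  have "g (z + t *\<^sub>R p + \<xi> *\<^sub>R q) - g (z + \<xi> *\<^sub>R q) = t *\<^sub>R H p + (R1 - R2)"
    unfolding R1_def R2_def using linear_add[OF lin] linear_cmul[OF lin] by (simp add: algebra_simps)
  then have "f (z + t *\<^sub>R p + t *\<^sub>R q) - f (z + t *\<^sub>R q) - f (z + t *\<^sub>R p) + f z - t * t * (q \<bullet> H p)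
      = t * ((R1 - R2) \<bullet> q)"
    using mvt by (simp add: inner_add_left inner_add_right inner_commute distrib_left)
  also have "\<bar>\<dots>\<bar> \<le> t * (e * t * ((norm p + 2 * norm q) * norm q))"
    using R t by (simp add: abs_mult mult_left_mono)
  finally show ?thesis by (simp add: ac_simps)
qed

(* The second difference of f at z along t u and t v is symmetric in u and v, but approximates
  t\<^sup>2 v \<bullet> H u up to o(t\<^sup>2). *)
lemma hessian_asymmetry_le:
  fixes f :: "'a::real_inner \<Rightarrow> real"
  assumes S: "open S" and z: "z \<in> S"
    and grad: "\<And>w. w \<in> S \<Longrightarrow> (f has_derivative (\<lambda>h. g w \<bullet> h)) (at w)"
    and hess: "(g has_derivative H) (at z)" and e: "0 < e"
  shows "\<bar>u \<bullet> H v - v \<bullet> H u\<bar> \<le> e * ((norm u + 2 * norm v) * norm v + (norm v + 2 * norm u) * norm u)"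
proof -
  obtain r where r: "r > 0" "ball z r \<subseteq> S" using S z open_contains_ball by blast
  obtain d where d: "d > 0" and approx: "\<And>y. norm (y - z) < d \<Longrightarrow>
      norm (g y - g z - H (y - z)) \<le> e * norm (y - z)"
    using hess e unfolding has_derivative_at_alt by blast
  define \<delta> where "\<delta> = min d r"
  define t where "t = \<delta> / (norm u + norm v + 1)"
  have "0 < norm u + norm v + 1"
    using norm_ge_zero[of u] norm_ge_zero[of v] by linarith
  then have "t * (norm u + norm v + 1) = \<delta>" and t: "0 < t"
    using d r unfolding t_def \<delta>_def by simp_all
  then have small: "t * (norm u + norm v) < \<delta>" "t * (norm v + norm u) < \<delta>"
    by (simp_all only: distrib_left mult_1_right add.commute[of "norm v"])
  have ball: "ball z \<delta> \<subseteq> S" using r(2) by (auto simp: \<delta>_def)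
  have approx_\<delta>: "norm (g y - g z - H (y - z)) \<le> e * norm (y - z)" if "norm (y - z) < \<delta>" for y
    using approx that by (simp add: \<delta>_def)
  have estimate: "\<bar>f (z + t *\<^sub>R p + t *\<^sub>R q) - f (z + t *\<^sub>R q) - f (z + t *\<^sub>R p) + f z - t * t * (q \<bullet> H p)\<bar>
      \<le> e * (t * t) * ((norm p + 2 * norm q) * norm q)" if "t * (norm p + norm q) < \<delta>" for p q
    using has_derivative_linear[OF hess] e approx_\<delta> t that
    by (intro second_difference_estimate[OF ball grad]) simp_all
  let ?\<Delta> = "f (z + t *\<^sub>R u + t *\<^sub>R v) - f (z + t *\<^sub>R v) - f (z + t *\<^sub>R u) + f z"
  have "z + t *\<^sub>R v + t *\<^sub>R u = z + t *\<^sub>R u + t *\<^sub>R v"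
    by (simp add: algebra_simps)
  then have est_uv: "\<bar>?\<Delta> - t * t * (v \<bullet> H u)\<bar> \<le> e * (t * t) * ((norm u + 2 * norm v) * norm v)"
    and est_vu: "\<bar>?\<Delta> - t * t * (u \<bullet> H v)\<bar> \<le> e * (t * t) * ((norm v + 2 * norm u) * norm u)"
    using estimate[OF small(1)] estimate[OF small(2)] by (simp_all add: algebra_simps)
  have "t * t * \<bar>u \<bullet> H v - v \<bullet> H u\<bar> = \<bar>t * t * (u \<bullet> H v - v \<bullet> H u)\<bar>"
    by (simp add: abs_mult)
  also have "\<dots> = \<bar>(?\<Delta> - t * t * (v \<bullet> H u)) - (?\<Delta> - t * t * (u \<bullet> H v))\<bar>"
    by (simp add: algebra_simps)
  also have "\<dots> \<le> \<bar>?\<Delta> - t * t * (v \<bullet> H u)\<bar> + \<bar>?\<Delta> - t * t * (u \<bullet> H v)\<bar>"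
    by (rule abs_triangle_ineq4)
  also have "\<dots> \<le> e * (t * t) * ((norm u + 2 * norm v) * norm v) + e * (t * t) * ((norm v + 2 * norm u) * norm u)"
    by (rule add_mono[OF est_uv est_vu])
  also have "\<dots> = t * t * (e * ((norm u + 2 * norm v) * norm v + (norm v + 2 * norm u) * norm u))"
    by (simp add: algebra_simps)
  finally show ?thesis using t by simp
qed

lemma hessian_symmetric:
  fixes f :: "'a::real_inner \<Rightarrow> real"
  assumes "open S" "z \<in> S"
    and "\<And>w. w \<in> S \<Longrightarrow> (f has_derivative (\<lambda>h. g w \<bullet> h)) (at w)"
    and "(g has_derivative H) (at z)"
  shows "u \<bullet> H v = v \<bullet> H u"
proof -
  let ?C = "(norm u + 2 * norm v) * norm v + (norm v + 2 * norm u) * norm u"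
  have "\<bar>u \<bullet> H v - v \<bullet> H u\<bar> \<le> 0"
    using hessian_asymmetry_le[OF assms]
    by (intro tendsto_lowerbound[of "\<lambda>e. e * ?C" 0 "at_right 0"])
      (auto intro!: tendsto_eq_intros exI[of _ 1] simp: eventually_at_right_field)
  then show ?thesis by simp
qed

lemma symmetric_nonneg_operator_norm_le:
  fixes H :: "'a::real_inner \<Rightarrow> 'a"
  assumes lin: "linear H"
    and sym: "\<And>u v. u \<bullet> H v = v \<bullet> H u"
    and nonneg: "\<And>v. 0 \<le> v \<bullet> H v"
    and upper: "\<And>v. v \<bullet> H v \<le> L * (v \<bullet> v)"
  shows "norm (H v) \<le> L * norm v"
proof -
  have L_nonneg: "0 \<le> L" if "v \<noteq> 0"
  proof -
    have "0 \<le> L * (v \<bullet> v)" using nonneg[of v] upper[of v] by linarith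
    moreover have "0 < v \<bullet> v" using that by simp
    ultimately show ?thesis by (simp add: zero_le_mult_iff)
  qed
  show ?thesis
  proof (cases "v = 0 \<or> H v = 0")
    case True
    then show ?thesis using L_nonneg linear_0[OF lin] by (cases "v = 0") auto
  next
    case False
    then have nv: "0 < norm v" and nHv: "0 < norm (H v)" by auto
    define u where "u = (norm v / norm (H v)) *\<^sub>R H v"
    have "4 * (norm v * norm (H v)) = 4 * (u \<bullet> H v)"
      using nHv by (simp add: u_def power2_norm_eq_inner[symmetric] power2_eq_square)
    also have "\<dots> = (u + v) \<bullet> H (u + v) - (u - v) \<bullet> H (u - v)"
      using sym[of u v] by (simp add: linear_add[OF lin] linear_diff[OF lin] inner_add_left
          inner_add_right inner_diff_left inner_diff_right)
    also have "\<dots> \<le> L * (norm (u + v))\<^sup>2"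
      using upper[of "u + v"] nonneg[of "u - v"] by (simp add: power2_norm_eq_inner)
    also have "\<dots> \<le> L * (2 * norm v)\<^sup>2"
    proof (rule mult_left_mono)
      have "norm (u + v) \<le> 2 * norm v"
        using norm_triangle_ineq[of u v] nHv by (simp add: u_def)
      then show "(norm (u + v))\<^sup>2 \<le> (2 * norm v)\<^sup>2"
        by (rule power_mono) simp
      show "0 \<le> L" using L_nonneg nv by simp
    qed
    finally have "norm v * norm (H v) \<le> norm v * (L * norm v)"
      by (simp add: power2_eq_square algebra_simps)
    then show ?thesis using nv by simp
  qed
qed

lemma convex_on_hessian_onorm_le:
  fixes f :: "'a::{real_inner, perfect_space} \<Rightarrow> real"
  assumes cvx: "convex_on S f" and S: "open S" and z: "z \<in> S"
    and grad: "\<And>w. w \<in> S \<Longrightarrow> (f has_derivative (\<lambda>h. g w \<bullet> h)) (at w)"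
    and hess: "(g has_derivative H) (at z)"
    and upper: "\<And>v. v \<bullet> H v \<le> L * (v \<bullet> v)"
  shows "onorm H \<le> L"
proof (rule onorm_le)
  show "norm (H v) \<le> L * norm v" for v
    by (rule symmetric_nonneg_operator_norm_le[OF has_derivative_linear[OF hess]
          hessian_symmetric[OF S z grad hess] convex_on_hessian_nonneg[OF cvx S z grad hess] upper])
qed

lemma convex_on_gradient_lipschitz_on:
  fixes f :: "'a::{real_inner, perfect_space} \<Rightarrow> real"
  assumes cvx: "convex_on S f" and S: "open S"
    and K: "convex K" "K \<subseteq> S" "K \<noteq> {}"
    and grad: "\<And>w. w \<in> S \<Longrightarrow> (f has_derivative (\<lambda>h. g w \<bullet> h)) (at w)"
    and hess: "\<And>w. w \<in> S \<Longrightarrow> (g has_derivative H w) (at w)"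
    and upper: "\<And>w v. w \<in> K \<Longrightarrow> v \<bullet> H w v \<le> L * (v \<bullet> v)"
  shows "L-lipschitz_on K g"
proof (rule lipschitz_onI)
  have onorm: "onorm (H w) \<le> L" if "w \<in> K" for w
    using convex_on_hessian_onorm_le[OF cvx S _ grad hess upper] that K(2) by blast
  have "(g has_derivative H w) (at w within K)" if "w \<in> K" for w
    using hess K(2) that by (blast intro: has_derivative_at_withinI)
  then show "dist (g a) (g b) \<le> L * dist a b" if "a \<in> K" "b \<in> K" for a b
    using differentiable_bound[where f' = H, OF K(1) _ onorm that] by (simp add: dist_norm)
  obtain w where "w \<in> K" using K(3) by blast
  then show "0 \<le> L"
    using onorm_pos_le[OF has_derivative_bounded_linear[OF hess]] onorm K(2) by (meson order_trans subsetD)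
qed

(* The consensus step W \<otimes> I_d on stacked vectors. *)
definition mixing_map :: "real^'m^'m \<Rightarrow> real^'d^'m \<Rightarrow> real^'d^'m" where
  "mixing_map W X = (\<chi> i. \<Sum>j\<in>UNIV. W $ i $ j *\<^sub>R X $ j)"

lemma linear_mixing_map: "linear (mixing_map W)"
  by (rule linearI)
    (simp_all add: mixing_map_def vec_eq_iff scaleR_add_right sum.distrib scaleR_sum_right mult_ac)

lemma linear_consensus_map: "linear (consensus_map W)"
  by (rule linearI)
    (simp_all add: consensus_map_def vec_eq_iff scaleR_add_right sum.distrib scaleR_sum_right mult_ac)

lemma bounded_linear_consensus_map: "bounded_linear (consensus_map W)"
  using linear_consensus_map linear_conv_bounded_linear by blast

lemma norm_consensus_map_le:
  fixes X :: "real^'d^'m"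
  shows "norm (consensus_map W X)
    \<le> largest_singular_value (consensus_map W :: real^'d^'m \<Rightarrow> real^'d^'m) * norm X"
  unfolding largest_singular_value_def by (rule onorm[OF bounded_linear_consensus_map])

lemma largest_singular_value_consensus_map_nonneg:
  "0 \<le> largest_singular_value (consensus_map W :: real^'d^'m \<Rightarrow> real^'d^'m)"
  unfolding largest_singular_value_def by (rule onorm_pos_le[OF bounded_linear_consensus_map])

lemma mixing_map_mem_convex:
  assumes "convex K" and nonneg: "\<And>i j. 0 \<le> W $ i $ j" and row: "\<And>i. (\<Sum>j\<in>UNIV. W $ i $ j) = 1"
    and "\<And>j. X $ j \<in> K"
  shows "mixing_map W X $ i \<in> K"
  unfolding mixing_map_def vec_lambda_beta
  by (rule convex_sum[OF finite[of UNIV] \<open>convex K\<close> row]) (simp_all add: assms)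

lemma mixing_map_const:
  assumes row: "\<And>i. (\<Sum>j\<in>UNIV. W $ i $ j) = 1"
  shows "mixing_map W (\<chi> i. a) = (\<chi> i. a)"
  by (simp add: mixing_map_def vec_eq_iff scaleR_sum_left[symmetric] row)

lemma consensus_map_perp:
  fixes W :: "real^'m^'m" and X :: "real^'d^'m"
  assumes row: "\<And>i. (\<Sum>j\<in>UNIV. W $ i $ j) = 1"
  shows "consensus_map W (perp X) = consensus_map W X"
proof -
  have "(\<Sum>j\<in>UNIV. (W $ i $ j - 1 / real CARD('m))) = 0" for i :: 'm
    using row[of i] by (simp add: sum_subtractf)
  then show ?thesis
    by (simp add: consensus_map_def perp_def vec_eq_iff scaleR_diff_right sum_subtractf
        flip: scaleR_sum_left)
qed

lemma perp_mixing_map: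
  assumes col: "\<And>j. (\<Sum>i\<in>UNIV. W $ i $ j) = 1"
  shows "perp (mixing_map W X) = consensus_map W X"
proof -
  have "(\<Sum>i\<in>UNIV. mixing_map W X $ i) = (\<Sum>j\<in>UNIV. \<Sum>i\<in>UNIV. W $ i $ j *\<^sub>R X $ j)"
    unfolding mixing_map_def vec_lambda_beta by (rule sum.swap)
  also have "\<dots> = (\<Sum>j\<in>UNIV. X $ j)"
    by (simp add: col flip: scaleR_sum_left)
  finally have "stack_avg (mixing_map W X) = stack_avg X"
    by (simp add: stack_avg_def)
  then show ?thesis
    by (simp add: perp_def consensus_map_def mixing_map_def stack_avg_def vec_eq_iff
        scaleR_diff_left sum_subtractf scaleR_sum_right)
qed

lemma power2_norm_vec: "(norm X)\<^sup>2 = (\<Sum>i\<in>UNIV. (norm (X $ i))\<^sup>2)"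
  by (simp add: norm_vec_def L2_set_def sum_nonneg)

lemma norm_mixing_map_le:
  assumes row: "\<And>i. (\<Sum>j\<in>UNIV. W $ i $ j) = 1"
    and col: "\<And>j. (\<Sum>i\<in>UNIV. W $ i $ j) = 1"
    and nonneg: "\<And>i j. 0 \<le> W $ i $ j"
  shows "norm (mixing_map W X) \<le> norm X"
proof (rule power2_le_imp_le)
  have row_le: "(norm (mixing_map W X $ i))\<^sup>2 \<le> (\<Sum>j\<in>UNIV. W $ i $ j * (norm (X $ j))\<^sup>2)" for i
  proof -
    have "norm (mixing_map W X $ i) \<le> (\<Sum>j\<in>UNIV. sqrt (W $ i $ j) * (sqrt (W $ i $ j) * norm (X $ j)))"
      using norm_sum[of "\<lambda>j. W $ i $ j *\<^sub>R X $ j" UNIV] nonneg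
      by (simp add: mixing_map_def mult.assoc[symmetric])
    then have "(norm (mixing_map W X $ i))\<^sup>2
        \<le> (\<Sum>j\<in>UNIV. sqrt (W $ i $ j) * (sqrt (W $ i $ j) * norm (X $ j)))\<^sup>2"
      by (rule power_mono) simp
    also have "\<dots> \<le> (\<Sum>j\<in>UNIV. (sqrt (W $ i $ j))\<^sup>2) * (\<Sum>j\<in>UNIV. (sqrt (W $ i $ j) * norm (X $ j))\<^sup>2)"
      by (rule Cauchy_Schwarz_ineq_sum)
    also have "\<dots> = (\<Sum>j\<in>UNIV. W $ i $ j * (norm (X $ j))\<^sup>2)"
      using nonneg row[of i] by (simp add: power_mult_distrib)
    finally show ?thesis .
  qed
  have "(norm (mixing_map W X))\<^sup>2 \<le> (\<Sum>i\<in>UNIV. \<Sum>j\<in>UNIV. W $ i $ j * (norm (X $ j))\<^sup>2)"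
    unfolding power2_norm_vec[of "mixing_map W X"] by (rule sum_mono[OF row_le])
  also have "\<dots> = (norm X)\<^sup>2"
    by (subst sum.swap) (simp add: power2_norm_vec[of X] col flip: sum_distrib_right)
  finally show "(norm (mixing_map W X))\<^sup>2 \<le> (norm X)\<^sup>2" .
qed simp

lemma norm_perp_mixing_map_add_le:
  fixes X Y :: "real^'d^'m"
  assumes row: "\<And>i. (\<Sum>j\<in>UNIV. W $ i $ j) = 1"
    and col: "\<And>j. (\<Sum>i\<in>UNIV. W $ i $ j) = 1"
  shows "norm (perp (mixing_map W (X + Y)))
    \<le> largest_singular_value (consensus_map W :: real^'d^'m \<Rightarrow> real^'d^'m) * norm (perp X)
      + largest_singular_value (consensus_map W :: real^'d^'m \<Rightarrow> real^'d^'m) * norm Y"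
proof -
  have "perp (mixing_map W (X + Y)) = consensus_map W (perp X) + consensus_map W Y"
    by (simp add: perp_mixing_map[OF col] consensus_map_perp[OF row] linear_add[OF linear_consensus_map])
  then show ?thesis
    unfolding \<open>perp (mixing_map W (X + Y)) = _\<close>
    using norm_triangle_ineq[of "consensus_map W (perp X)" "consensus_map W Y"]
      norm_consensus_map_le[of W "perp X"] norm_consensus_map_le[of W Y]
    by linarith
qed

lemma norm_mixing_map_add_diff_le:
  assumes row: "\<And>i. (\<Sum>j\<in>UNIV. W $ i $ j) = 1"
    and col: "\<And>j. (\<Sum>i\<in>UNIV. W $ i $ j) = 1"
    and nonneg: "\<And>i j. 0 \<le> W $ i $ j"
  shows "norm (mixing_map W (X + Y) - X) \<le> 2 * norm (perp X) + norm Y"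
proof -
  have X: "X = perp X + (\<chi> i. stack_avg X)"
    by (simp add: perp_def vec_eq_iff)
  have "mixing_map W (X + Y) - X = (mixing_map W (perp X) - perp X) + mixing_map W Y"
    by (subst (1 2) X) (simp add: linear_add[OF linear_mixing_map] mixing_map_const[OF row])
  then have "norm (mixing_map W (X + Y) - X) \<le> norm (mixing_map W (perp X) - perp X) + norm (mixing_map W Y)"
    by (simp add: norm_triangle_ineq)
  also have "\<dots> \<le> norm (mixing_map W (perp X)) + norm (perp X) + norm (mixing_map W Y)"
    by (simp add: norm_triangle_ineq4)
  also have "\<dots> \<le> 2 * norm (perp X) + norm Y"
    using norm_mixing_map_le[OF row col nonneg, of "perp X"] norm_mixing_map_le[OF row col nonneg, of Y]
    by linarith
  finally show ?thesis .
qed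

lemma mixing_iterates_mem_convex:
  assumes "convex K" and nonneg: "\<And>i j. 0 \<le> W $ i $ j" and row: "\<And>i. (\<Sum>j\<in>UNIV. W $ i $ j) = 1"
    and \<alpha>: "0 \<le> \<alpha>" "\<alpha> \<le> 1"
    and x0: "\<And>i. x 0 $ i \<in> K" and xhat: "\<And>n i. xhat n $ i \<in> K"
    and x_next: "\<And>n. x (Suc n) = mixing_map W (x n + \<alpha> *\<^sub>R (xhat n - x n))"
  shows "x n $ i \<in> K"
proof (induction n arbitrary: i)
  case (Suc n)
  have "x n $ j + \<alpha> *\<^sub>R (xhat n $ j - x n $ j) \<in> K" for j
    using convexD_alt[OF \<open>convex K\<close> Suc.IH[of j] xhat[of n j], of \<alpha>] \<alpha>
    by (simp add: algebra_simps)
  then show ?case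
    unfolding x_next by (intro mixing_map_mem_convex[OF \<open>convex K\<close> nonneg row]) simp
qed (rule x0)

lemma norm_lipschitz_components_diff_le:
  fixes X Y :: "'a::real_normed_vector^'m" and F :: "'m \<Rightarrow> 'a \<Rightarrow> 'b::real_normed_vector"
  assumes lip: "\<And>j. L-lipschitz_on K (F j)" and X: "\<And>j. X $ j \<in> K" and Y: "\<And>j. Y $ j \<in> K"
  shows "norm (\<chi> j. F j (Y $ j) - F j (X $ j)) \<le> L * norm (Y - X)"
proof -
  have "norm (\<chi> j. F j (Y $ j) - F j (X $ j)) \<le> norm (L *\<^sub>R (Y - X))"
  proof (rule norm_le_componentwise_cart)
    show "norm ((\<chi> j. F j (Y $ j) - F j (X $ j)) $ j) \<le> norm ((L *\<^sub>R (Y - X)) $ j)" for j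
      using lipschitz_on_normD[OF lip Y X] lipschitz_on_nonneg[OF lip] by simp
  qed
  then show ?thesis using lipschitz_on_nonneg[OF lip] by simp
qed

theorem proposition3p5:
  fixes K Oset :: "(real^'d::finite) set"
    and f :: "'m::finite \<Rightarrow> real^'d \<Rightarrow> real"
    and gf :: "'m \<Rightarrow> real^'d \<Rightarrow> real^'d"
    and Hf :: "'m \<Rightarrow> real^'d \<Rightarrow> real^'d \<Rightarrow> real^'d"
    and G :: "real^'d \<Rightarrow> real"
    and \<mu> L :: real and Li :: "'m \<Rightarrow> real"
    and E :: "('m \<times> 'm) set"
    and W :: "real^'m^'m"
    and ft :: "'m \<Rightarrow> real^'d \<Rightarrow> real^'d \<Rightarrow> real"
    and gft :: "'m \<Rightarrow> real^'d \<Rightarrow> real^'d \<Rightarrow> real^'d"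
    and \<alpha> :: real
    and x y xhat :: "nat \<Rightarrow> real^'d^'m"
  assumes
    \<comment> \<open>(A)\<close>
    K_ne: "K \<noteq> {}" and K_closed: "closed K" and K_convex: "convex K"
    and O_open: "open Oset" and KO: "K \<subseteq> Oset"
    and f_grad: "\<And>i z. z \<in> Oset \<Longrightarrow> (f i has_derivative (\<lambda>h. gf i z \<bullet> h)) (at z)"
    and f_hess: "\<And>i z. z \<in> Oset \<Longrightarrow> (gf i has_derivative Hf i z) (at z)"
    and f_convex: "\<And>i. convex_on Oset (f i)"
    and mu_pos: "\<mu> > 0"
    and F_hess_lower: "\<And>z v. z \<in> K \<Longrightarrow>
        \<mu> * (v \<bullet> v) \<le> v \<bullet> ((1 / real CARD('m)) *\<^sub>R (\<Sum>i\<in>UNIV. Hf i z v))"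
    and F_hess_upper: "\<And>z v. z \<in> K \<Longrightarrow>
        v \<bullet> ((1 / real CARD('m)) *\<^sub>R (\<Sum>i\<in>UNIV. Hf i z v)) \<le> L * (v \<bullet> v)"
    and G_convex: "convex_on K G"
    and fi_hess_upper: "\<And>i z v. z \<in> K \<Longrightarrow> v \<bullet> Hf i z v \<le> Li i * (v \<bullet> v)"
    \<comment> \<open>(B)\<close>
    and E_sym: "\<And>i j. (i, j) \<in> E \<Longrightarrow> (j, i) \<in> E"
    and E_irrefl: "\<And>i. (i, i) \<notin> E"
    and E_connected: "\<And>i j. (i, j) \<in> E\<^sup>*"
    \<comment> \<open>(W)\<close>
    and W_diag: "\<And>i. W $ i $ i > 0"
    and W_edge: "\<And>i j. i \<noteq> j \<Longrightarrow> (W $ i $ j > 0 \<longleftrightarrow> (i, j) \<in> E)"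
    and W_nonedge: "\<And>i j. i \<noteq> j \<Longrightarrow> (i, j) \<notin> E \<Longrightarrow> W $ i $ j = 0"
    and W_row: "\<And>i. (\<Sum>j\<in>UNIV. W $ i $ j) = 1"
    and W_col: "\<And>j. (\<Sum>i\<in>UNIV. W $ i $ j) = 1"
    \<comment> \<open>(C)\<close>
    and ft_C2: "\<And>i. C2_on (\<lambda>p. ft i (fst p) (snd p)) (Oset \<times> Oset)"
    and ft_grad: "\<And>i u z. u \<in> Oset \<Longrightarrow> z \<in> Oset \<Longrightarrow>
        ((\<lambda>w. ft i w z) has_derivative (\<lambda>h. gft i u z \<bullet> h)) (at u)"
    and ft_consistent: "\<And>i z. z \<in> K \<Longrightarrow> gft i z z = gf i z"
    and ft_lipschitz: "\<And>i z. z \<in> K \<Longrightarrow> \<exists>C. C-lipschitz_on K (\<lambda>u. gft i u z)"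
    and ft_strongly_convex: "\<And>i z. z \<in> K \<Longrightarrow> strongly_convex_on K (\<lambda>u. ft i u z)"
    \<comment> \<open>step size\<close>
    and alpha: "0 < \<alpha>" "\<alpha> \<le> 1"
    \<comment> \<open>SONATA iterates\<close>
    and x0: "\<And>i. x 0 $ i \<in> K"
    and y0: "\<And>i. y 0 $ i = gf i (x 0 $ i)"
    and xhat_in: "\<And>\<nu> i. xhat \<nu> $ i \<in> K"
    and xhat_min: "\<And>\<nu> i u. u \<in> K \<Longrightarrow>
        ft i (xhat \<nu> $ i) (x \<nu> $ i) + (y \<nu> $ i - gf i (x \<nu> $ i)) \<bullet> (xhat \<nu> $ i - x \<nu> $ i) + G (xhat \<nu> $ i)
        \<le> ft i u (x \<nu> $ i) + (y \<nu> $ i - gf i (x \<nu> $ i)) \<bullet> (u - x \<nu> $ i) + G u"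
    and x_step: "\<And>\<nu> i. x (Suc \<nu>) $ i =
        (\<Sum>j\<in>UNIV. W $ i $ j *\<^sub>R (x \<nu> $ j + \<alpha> *\<^sub>R (xhat \<nu> $ j - x \<nu> $ j)))"
    and y_step: "\<And>\<nu> i. y (Suc \<nu>) $ i =
        (\<Sum>j\<in>UNIV. W $ i $ j *\<^sub>R (y \<nu> $ j + gf j (x (Suc \<nu>) $ j) - gf j (x \<nu> $ j)))"
  shows "norm (perp (x (Suc \<nu>))) \<le>
           largest_singular_value (consensus_map W :: real^'d^'m \<Rightarrow> real^'d^'m) * norm (perp (x \<nu>))
           + \<alpha> * largest_singular_value (consensus_map W :: real^'d^'m \<Rightarrow> real^'d^'m) * norm (xhat \<nu> - x \<nu>)
       \<and> norm (perp (y (Suc \<nu>))) \<le>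
           largest_singular_value (consensus_map W :: real^'d^'m \<Rightarrow> real^'d^'m) * norm (perp (y \<nu>))
           + 2 * Max (range Li) * largest_singular_value (consensus_map W :: real^'d^'m \<Rightarrow> real^'d^'m) * norm (perp (x \<nu>))
           + \<alpha> * Max (range Li) * largest_singular_value (consensus_map W :: real^'d^'m \<Rightarrow> real^'d^'m) * norm (xhat \<nu> - x \<nu>)"
proof -
  let ?\<rho> = "largest_singular_value (consensus_map W :: real^'d^'m \<Rightarrow> real^'d^'m)"
  let ?L = "Max (range Li)"
  have W_nonneg: "0 \<le> W $ i $ j" for i j
    using W_diag[of i] W_edge[of i j] W_nonedge[of i j] by (cases "i = j") (auto simp: less_le)
  have x_next: "x (Suc n) = mixing_map W (x n + \<alpha> *\<^sub>R (xhat n - x n))" for n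
    by (simp add: vec_eq_iff mixing_map_def x_step)
  have x_in_K: "x n $ i \<in> K" for n i
    using mixing_iterates_mem_convex[OF K_convex W_nonneg W_row _ _ x0 xhat_in x_next] alpha by simp
  have "(Li j)-lipschitz_on K (gf j)" for j
    by (rule convex_on_gradient_lipschitz_on[OF f_convex O_open K_convex KO K_ne f_grad f_hess
          fi_hess_upper])
  then have gf_lipschitz: "?L-lipschitz_on K (gf j)" for j
    by (rule lipschitz_on_le) (rule Max_ge, simp_all)
  define d where "d = xhat \<nu> - x \<nu>"
  define Dg :: "real^'d^'m" where "Dg = (\<chi> j. gf j (x (Suc \<nu>) $ j) - gf j (x \<nu> $ j))"
  have y_next: "y (Suc \<nu>) = mixing_map W (y \<nu> + Dg)"
    by (simp add: vec_eq_iff mixing_map_def y_step Dg_def algebra_simps)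
  have "norm Dg \<le> ?L * norm (x (Suc \<nu>) - x \<nu>)"
    unfolding Dg_def by (rule norm_lipschitz_components_diff_le[OF gf_lipschitz x_in_K x_in_K])
  also have "\<dots> \<le> ?L * (2 * norm (perp (x \<nu>)) + \<alpha> * norm d)"
    using norm_mixing_map_add_diff_le[OF W_row W_col W_nonneg, of "x \<nu>" "\<alpha> *\<^sub>R d"]
      lipschitz_on_nonneg[OF gf_lipschitz] alpha
    by (simp add: x_next d_def mult_left_mono)
  finally have "?\<rho> * norm Dg \<le> ?\<rho> * (?L * (2 * norm (perp (x \<nu>)) + \<alpha> * norm d))"
    by (rule mult_left_mono[OF _ largest_singular_value_consensus_map_nonneg])
  moreover have "norm (perp (y (Suc \<nu>))) \<le> ?\<rho> * norm (perp (y \<nu>)) + ?\<rho> * norm Dg"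
    unfolding y_next by (rule norm_perp_mixing_map_add_le[OF W_row W_col])
  moreover have "norm (perp (x (Suc \<nu>))) \<le> ?\<rho> * norm (perp (x \<nu>)) + ?\<rho> * (\<alpha> * norm d)"
    using norm_perp_mixing_map_add_le[OF W_row W_col, of "x \<nu>" "\<alpha> *\<^sub>R d"] alpha
    by (simp add: x_next[of \<nu>, folded d_def])
  ultimately show ?thesis
    unfolding d_def[symmetric] by (simp add: algebra_simps)
qed

end
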